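(* Up to multiplication by a positive integer, every basic weight of a basic system of type $B$ is one of the following (coordinates $\lambda_k=\langle\lambda,e_k\rangle$): (1) $(B_2,1,1)$: $(0,1)$; (2) $(B_2,1,2)$: $(\tfrac12,\tfrac12)$, $(-\tfrac12,\tfrac12)$; (3) $(B_2,2,1)$: $(1,0)$, $(0,-1)$; (4) $(B_2,2,2)$: $(\tfrac12,-\tfrac12)$; (5) $(B_3,2,2)$: $(1,0,1)$, $(0,-1,1)$; (6) $(B_3,2,3)$: $(\tfrac12,-\tfrac12,\tfrac12)$; (7) $(B_3,3,2)$: $(1,0,-1)$; (8) $(B_4,3,3)$: $(1,0,-1,1)$.
   Context: $B_n$ is realized in $\mathbb R^n$ with orthonormal basis $e_1,\dots,e_n$ and standard inner product, simple roots $\alpha_k=e_k-e_{k+1}$ ($k<n$), $\alpha_n=e_n$. Let $W$ be the Weyl group, $\alpha^\vee=2\alpha/\langle\alpha,\alpha\rangle$. A weight is integral if $\langle\lambda,\alpha^\vee\rangle\in\mathbb Z$ for all roots $\alpha$; $\overline\lambda$ is the dominant weight in $W\lambda$. For $I=\Delta\setminus\{\alpha_i\}$, $J=\Delta\setminus\{\alpha_j\}$, a basic weight of $(\Phi,i,j)$ is an integral $\lambda$ with $\langle\lambda,\alpha^\vee\rangle\in\mathbb Z_{>0}$ for all $\alpha\in I$ and $\{\alpha\in\Delta:\langle\overline\lambda,\alpha\rangle=0\}=J$; $(\Phi,i,j)$ is a basic system if it has a basic weight. *)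

theory Defs
  imports Complex_Main
begin

text \<open>Vectors of \<real>^n are represented as real lists of length n; coordinate
  k (1-based) of x is x ! (k - 1).\<close>

definition ip :: "real list \<Rightarrow> real list \<Rightarrow> real" where
  "ip x y = sum_list (map (\<lambda>(a, b). a * b) (zip x y))"

definition vadd :: "real list \<Rightarrow> real list \<Rightarrow> real list" where
  "vadd x y = map (\<lambda>(a, b). a + b) (zip x y)"

definition smult :: "real \<Rightarrow> real list \<Rightarrow> real list" where
  "smult c x = map (\<lambda>a. c * a) x"

definition vsub :: "real list \<Rightarrow> real list \<Rightarrow> real list" where
  "vsub x y = vadd x (smult (-1) y)"

definition ev :: "nat \<Rightarrow> nat \<Rightarrow> real list" where
  "ev n k = map (\<lambda>t. if t = k then 1 else 0) [1..<Suc n]"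

definition roots_B :: "nat \<Rightarrow> real list set" where
  "roots_B n =
     {smult s (ev n k) | s k. s \<in> {1, -1} \<and> k \<in> {1..n}} \<union>
     {vadd (smult s (ev n k)) (smult t (ev n l)) | s t k l.
        s \<in> {1, -1} \<and> t \<in> {1, -1} \<and> k \<in> {1..n} \<and> l \<in> {1..n} \<and> k \<noteq> l}"

definition simple_root :: "nat \<Rightarrow> nat \<Rightarrow> real list" where
  "simple_root n k = (if k < n then vsub (ev n k) (ev n (Suc k)) else ev n n)"

definition simple_roots :: "nat \<Rightarrow> real list set" where
  "simple_roots n = simple_root n ` {1..n}"

definition coroot :: "real list \<Rightarrow> real list" where
  "coroot \<alpha> = smult (2 / ip \<alpha> \<alpha>) \<alpha>"

definition reflect :: "real list \<Rightarrow> real list \<Rightarrow> real list" where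
  "reflect \<alpha> x = vsub x (smult (ip x (coroot \<alpha>)) \<alpha>)"

inductive_set weyl_orbit :: "nat \<Rightarrow> real list \<Rightarrow> real list set" for n lam where
  base: "lam \<in> weyl_orbit n lam"
| step: "\<mu> \<in> weyl_orbit n lam \<Longrightarrow> \<alpha> \<in> roots_B n \<Longrightarrow> reflect \<alpha> \<mu> \<in> weyl_orbit n lam"

definition integral_weight :: "nat \<Rightarrow> real list \<Rightarrow> bool" where
  "integral_weight n lam \<longleftrightarrow> length lam = n \<and> (\<forall>\<alpha>\<in>roots_B n. ip lam (coroot \<alpha>) \<in> \<int>)"

definition dominant :: "nat \<Rightarrow> real list \<Rightarrow> bool" where
  "dominant n \<mu> \<longleftrightarrow> (\<forall>\<alpha>\<in>simple_roots n. ip \<mu> \<alpha> \<ge> 0)"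

definition dominant_rep :: "nat \<Rightarrow> real list \<Rightarrow> real list" where
  "dominant_rep n lam = (THE \<mu>. \<mu> \<in> weyl_orbit n lam \<and> dominant n \<mu>)"

definition basic_weight :: "nat \<Rightarrow> nat \<Rightarrow> nat \<Rightarrow> real list \<Rightarrow> bool" where
  "basic_weight n i j lam \<longleftrightarrow>
     integral_weight n lam \<and>
     (\<forall>\<alpha>\<in>simple_roots n - {simple_root n i}. ip lam (coroot \<alpha>) \<in> \<int> \<and> ip lam (coroot \<alpha>) > 0) \<and>
     {\<alpha>\<in>simple_roots n. ip (dominant_rep n lam) \<alpha> = 0} = simple_roots n - {simple_root n j}"

definition basic_system :: "nat \<Rightarrow> nat \<Rightarrow> nat \<Rightarrow> bool" where
  "basic_system n i j \<longleftrightarrow> (\<exists>lam. basic_weight n i j lam)"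

definition listed_B :: "nat \<Rightarrow> nat \<Rightarrow> nat \<Rightarrow> real list set" where
  "listed_B n i j =
    (if (n, i, j) = (2, 1, 1) then {[0, 1]}
     else if (n, i, j) = (2, 1, 2) then {[1/2, 1/2], [-1/2, 1/2]}
     else if (n, i, j) = (2, 2, 1) then {[1, 0], [0, -1]}
     else if (n, i, j) = (2, 2, 2) then {[1/2, -1/2]}
     else if (n, i, j) = (3, 2, 2) then {[1, 0, 1], [0, -1, 1]}
     else if (n, i, j) = (3, 2, 3) then {[1/2, -1/2, 1/2]}
     else if (n, i, j) = (3, 3, 2) then {[1, 0, -1]}
     else if (n, i, j) = (4, 3, 3) then {[1, 0, -1, 1]}
     else {})"

end

theory Submission
  imports Defs "HOL-Library.Multiset"
begin

text \<open>The reflections in the short roots \<open>\<plusminus>e\<^sub>k\<close> change the sign of one coordinate, those in the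
  long roots \<open>\<plusminus>e\<^sub>k \<plusminus> e\<^sub>l\<close> exchange two coordinates up to sign. So the multiset of the absolute
  values of the coordinates is constant on a Weyl orbit; the orbit is finite, a maximiser of
  \<open>\<langle>-, \<rho>\<rangle>\<close> on it is dominant, and a dominant weight, a decreasing sequence of non-negative
  numbers, is determined by that multiset.

  For a basic weight \<open>\<lambda>\<close> the simple roots orthogonal to the dominant weight in \<open>W\<lambda>\<close> are all
  but \<open>\<alpha>\<^sub>j\<close>, so that weight is \<open>(a, ..., a, 0, ..., 0)\<close> with \<open>j\<close> entries \<open>a > 0\<close>. Hence every
  \<open>\<lambda>\<^sub>k\<close> is \<open>\<plusminus>a\<close> or \<open>0\<close>, exactly \<open>j\<close> of them nonzero, and integrality makes \<open>a\<close> (if \<open>j < n\<close>)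
  or \<open>2a\<close> (if \<open>j = n\<close>) a positive integer. Positivity on \<open>I\<close> says that \<open>\<lambda>\<close> strictly decreases
  except at position \<open>i\<close> and that \<open>\<lambda>\<^sub>n > 0\<close> unless \<open>i = n\<close>. As values in \<open>{-a, 0, a}\<close> admit no
  strictly decreasing chain of length four, this forces \<open>i \<ge> n - 1\<close> and \<open>n \<le> 4\<close>, leaving finitely
  many sign patterns, which are exactly those listed.\<close>

section \<open>Coordinate vectors\<close>

lemma length_ev [simp]: "length (ev n k) = n"
  by (simp add: ev_def)

lemma nth_ev [simp]: "t < n \<Longrightarrow> ev n k ! t = (if Suc t = k then 1 else 0)"
  by (simp add: ev_def nth_upt del: upt_Suc)

lemma length_vadd [simp]: "length (vadd x y) = min (length x) (length y)"
  by (simp add: vadd_def)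

lemma nth_vadd [simp]: "t < length x \<Longrightarrow> t < length y \<Longrightarrow> vadd x y ! t = x ! t + y ! t"
  by (simp add: vadd_def)

lemma length_smult [simp]: "length (smult c x) = length x"
  by (simp add: smult_def)

lemma nth_smult [simp]: "t < length x \<Longrightarrow> smult c x ! t = c * x ! t"
  by (simp add: smult_def)

lemma smult_one [simp]: "smult 1 x = x"
  by (simp add: smult_def)

lemma length_vsub [simp]: "length (vsub x y) = min (length x) (length y)"
  by (simp add: vsub_def)

lemma nth_vsub [simp]: "t < length x \<Longrightarrow> t < length y \<Longrightarrow> vsub x y ! t = x ! t - y ! t"
  by (simp add: vsub_def)

lemma ip_conv_sum: "length x = n \<Longrightarrow> length y = n \<Longrightarrow> ip x y = (\<Sum>t<n. x ! t * y ! t)"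
  by (simp add: ip_def sum_list_sum_nth atLeast0LessThan)

lemma ip_commute: "length x = length y \<Longrightarrow> ip x y = ip y x"
  by (simp add: ip_conv_sum mult.commute)

lemma ip_smult_right: "length x = length y \<Longrightarrow> ip x (smult c y) = c * ip x y"
  by (simp add: ip_conv_sum sum_distrib_left algebra_simps)

lemma ip_smult_left: "length x = length y \<Longrightarrow> ip (smult c x) y = c * ip x y"
  by (simp add: ip_conv_sum sum_distrib_left algebra_simps)

lemma ip_vadd_right:
  "length x = n \<Longrightarrow> length y = n \<Longrightarrow> length z = n \<Longrightarrow> ip x (vadd y z) = ip x y + ip x z"
  by (simp add: ip_conv_sum sum.distrib algebra_simps)

lemma ip_vadd_left:
  "length x = n \<Longrightarrow> length y = n \<Longrightarrow> length z = n \<Longrightarrow> ip (vadd x y) z = ip x z + ip y z"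
  by (simp add: ip_conv_sum sum.distrib algebra_simps)

lemma ip_ev_right:
  assumes "length x = n" "k \<in> {1..n}"
  shows "ip x (ev n k) = x ! (k - 1)"
proof -
  have "ip x (ev n k) = (\<Sum>t<n. x ! t * ev n k ! t)"
    using assms(1) by (simp add: ip_conv_sum)
  also have "\<dots> = (\<Sum>t<n. if t = k - 1 then x ! t else 0)"
    using assms(2) by (intro sum.cong) auto
  also have "\<dots> = x ! (k - 1)"
    using assms(2) by auto
  finally show ?thesis .
qed

lemma ip_ev_left: "length x = n \<Longrightarrow> k \<in> {1..n} \<Longrightarrow> ip (ev n k) x = x ! (k - 1)"
  by (simp add: ip_commute ip_ev_right)

lemma ip_coroot: "length \<alpha> = length x \<Longrightarrow> ip x (coroot \<alpha>) = 2 / ip \<alpha> \<alpha> * ip x \<alpha>"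
  by (simp add: coroot_def ip_smult_right)

section \<open>Reflections and the Weyl orbit\<close>

lemma length_reflect [simp]: "length \<alpha> = length x \<Longrightarrow> length (reflect \<alpha> x) = length x"
  by (simp add: reflect_def)

lemma nth_reflect:
  "length \<alpha> = length x \<Longrightarrow> t < length x \<Longrightarrow> reflect \<alpha> x ! t = x ! t - ip x (coroot \<alpha>) * \<alpha> ! t"
  by (simp add: reflect_def)

lemma ip_reflect_left:
  assumes "length \<alpha> = n" "length x = n" "length y = n"
  shows "ip (reflect \<alpha> x) y = ip x y - ip x (coroot \<alpha>) * ip \<alpha> y"
  using assms by (simp add: ip_conv_sum nth_reflect sum_subtractf sum_distrib_left algebra_simps)

lemma reflect_short_root:
  assumes "length x = n" "k \<in> {1..n}" "s \<in> {1, -1}"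
  shows "reflect (smult s (ev n k)) x = x[k - 1 := - x ! (k - 1)]"
proof -
  have "ip x (coroot (smult s (ev n k))) = 2 * s * x ! (k - 1)"
    using assms by (auto simp: ip_coroot ip_smult_left ip_smult_right ip_ev_right ip_ev_left)
  then show ?thesis
    using assms by (intro nth_equalityI) (auto simp: nth_reflect nth_list_update)
qed

lemma reflect_long_root:
  assumes "length x = n" "k \<in> {1..n}" "l \<in> {1..n}" "k \<noteq> l" "s \<in> {1, -1}" "u \<in> {1, -1}"
  shows "reflect (vadd (smult s (ev n k)) (smult u (ev n l))) x
     = x[k - 1 := - s * u * x ! (l - 1), l - 1 := - s * u * x ! (k - 1)]"
proof -
  let ?\<alpha> = "vadd (smult s (ev n k)) (smult u (ev n l))"
  have "k - 1 \<noteq> l - 1" using assms(2-4) by auto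
  then have "ip ?\<alpha> ?\<alpha> = 2"
    using assms by (auto simp: ip_vadd_left ip_vadd_right ip_smult_left ip_smult_right ip_ev_right)
  then have "ip x (coroot ?\<alpha>) = s * x ! (k - 1) + u * x ! (l - 1)"
    using assms by (simp add: ip_coroot ip_vadd_right ip_smult_right ip_ev_right)
  then show ?thesis
    using assms \<open>k - 1 \<noteq> l - 1\<close>
    by (intro nth_equalityI) (auto simp: nth_reflect nth_list_update algebra_simps)
qed

lemma map_abs_negate_nth: "map abs (x[k := - x ! k]) = map abs (x :: real list)"
  by (cases "k < length x") (auto intro!: nth_equalityI simp: nth_list_update)

lemma mset_map_abs_signed_swap:
  fixes x :: "real list"
  assumes "k < length x" "l < length x" "\<bar>c\<bar> = 1"
  shows "mset (map abs (x[k := c * x ! l, l := c * x ! k])) = mset (map abs x)"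
proof -
  have "map abs (x[k := c * x ! l, l := c * x ! k]) = (map abs x)[k := map abs x ! l, l := map abs x ! k]"
    using assms by (simp add: map_update abs_mult)
  then show ?thesis
    using mset_swap[of l "map abs x" k] assms by simp
qed

lemma weyl_orbit_mset_map_abs:
  assumes "length lam = n" "\<mu> \<in> weyl_orbit n lam"
  shows "length \<mu> = n \<and> mset (map abs \<mu>) = mset (map abs lam)"
  using assms(2)
proof induction
  case base
  then show ?case using assms(1) by simp
next
  case (step \<mu> \<alpha>)
  then have "length \<mu> = n" by simp
  from \<open>\<alpha> \<in> roots_B n\<close> consider
      s k where "\<alpha> = smult s (ev n k)" "s \<in> {1, -1}" "k \<in> {1..n}"
    | s u k l where "\<alpha> = vadd (smult s (ev n k)) (smult u (ev n l))" "s \<in> {1, -1}" "u \<in> {1, -1}"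
        "k \<in> {1..n}" "l \<in> {1..n}" "k \<noteq> l"
    unfolding roots_B_def by blast
  then have "mset (map abs (reflect \<alpha> \<mu>)) = mset (map abs \<mu>)"
  proof cases
    case 1
    then show ?thesis
      using \<open>length \<mu> = n\<close> by (simp add: reflect_short_root map_abs_negate_nth)
  next
    case 2
    then have "reflect \<alpha> \<mu> = \<mu>[k - 1 := - s * u * \<mu> ! (l - 1), l - 1 := - s * u * \<mu> ! (k - 1)]"
      using \<open>length \<mu> = n\<close> by (simp add: reflect_long_root)
    also have "mset (map abs \<dots>) = mset (map abs \<mu>)"
      by (rule mset_map_abs_signed_swap) (use 2 \<open>length \<mu> = n\<close> in auto)
    finally show ?thesis .
  qed
  moreover have "length \<alpha> = n"
    using \<open>\<alpha> \<in> roots_B n\<close> by (auto simp: roots_B_def)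
  ultimately show ?case
    using step.IH \<open>length \<mu> = n\<close> by simp
qed

lemma finite_weyl_orbit:
  assumes "length lam = n"
  shows "finite (weyl_orbit n lam)"
proof (rule finite_subset)
  let ?A = "set lam \<union> uminus ` set lam"
  show "weyl_orbit n lam \<subseteq> {xs. set xs \<subseteq> ?A \<and> length xs = n}"
  proof
    fix \<mu> assume \<mu>: "\<mu> \<in> weyl_orbit n lam"
    have "v \<in> ?A" if "v \<in> set \<mu>" for v
    proof -
      have "\<bar>v\<bar> \<in> set (map abs lam)"
        using weyl_orbit_mset_map_abs[OF assms \<mu>] that by (metis image_eqI list.set_map set_mset_mset)
      then have "v \<in> set lam \<or> - v \<in> set lam"
        by (auto simp: abs_if split: if_splits)
      then show "v \<in> ?A"
        by (metis UnCI image_eqI minus_minus)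
    qed
    then show "\<mu> \<in> {xs. set xs \<subseteq> ?A \<and> length xs = n}"
      using weyl_orbit_mset_map_abs[OF assms \<mu>] by blast
  qed
  show "finite {xs. set xs \<subseteq> ?A \<and> length xs = n}"
    by (intro finite_lists_length_eq) simp
qed

section \<open>Simple roots and dominant weights\<close>

lemma length_simple_root [simp]: "length (simple_root n k) = n"
  by (simp add: simple_root_def)

lemma simple_root_in_roots_B:
  assumes "k \<in> {1..n}"
  shows "simple_root n k \<in> roots_B n"
proof (cases "k < n")
  case True
  then have "simple_root n k = vadd (smult 1 (ev n k)) (smult (-1) (ev n (Suc k)))"
    by (simp add: simple_root_def vsub_def)
  then show ?thesis
    unfolding roots_B_def using assms True
    by (intro UnI2 CollectI exI[of _ 1] exI[of _ "-1"] exI[of _ k] exI[of _ "Suc k"]) auto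
next
  case False
  then have "simple_root n k = smult 1 (ev n n)"
    by (simp add: simple_root_def)
  then show ?thesis
    unfolding roots_B_def using assms
    by (intro UnI1 CollectI exI[of _ 1] exI[of _ n]) auto
qed

lemma nth_simple_root:
  "t < n \<Longrightarrow> simple_root n k ! t =
     (if k < n then (if Suc t = k then 1 else 0) - (if t = k then 1 else 0)
      else if Suc t = n then 1 else 0)"
  by (simp add: simple_root_def)

lemma inj_on_simple_root: "inj_on (simple_root n) {1..n}"
proof
  fix k l assume kl: "k \<in> {1..n}" "l \<in> {1..n}" "simple_root n k = simple_root n l"
  show "k = l"
  proof (rule ccontr)
    assume "k \<noteq> l"
    then have "simple_root n k ! (k - 1) \<noteq> simple_root n l ! (k - 1)"
      using kl(1,2) by (auto simp: nth_simple_root split: if_splits)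
    with kl(3) show False by simp
  qed
qed

lemma ip_simple_root:
  "length x = n \<Longrightarrow> k \<in> {1..n} \<Longrightarrow>
     ip x (simple_root n k) = (if k < n then x ! (k - 1) - x ! k else x ! (n - 1))"
  by (auto simp: simple_root_def vsub_def ip_vadd_right ip_smult_right ip_ev_right)

lemma ip_coroot_simple_root:
  assumes "length x = n" "k \<in> {1..n}"
  shows "ip x (coroot (simple_root n k)) = (if k < n then x ! (k - 1) - x ! k else 2 * x ! (n - 1))"
proof -
  have "ip (simple_root n k) (simple_root n k) = (if k < n then 2 else 1)"
    using assms(2) by (auto simp: ip_simple_root nth_simple_root)
  then show ?thesis
    using assms by (simp add: ip_coroot ip_simple_root)
qed

lemma dominant_iff_sorted_rev:
  assumes "length \<mu> = n" "1 \<le> n"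
  shows "dominant n \<mu> \<longleftrightarrow> sorted (rev \<mu>) \<and> 0 \<le> \<mu> ! (n - 1)"
proof -
  have "{1..n} = insert n {1..<n}"
    using assms(2) by auto
  then have "dominant n \<mu> \<longleftrightarrow> 0 \<le> \<mu> ! (n - 1) \<and> (\<forall>k\<in>{1..<n}. \<mu> ! k \<le> \<mu> ! (k - 1))"
    using assms by (simp add: dominant_def simple_roots_def ip_simple_root)
  moreover have "(\<forall>k\<in>{1..<n}. \<mu> ! k \<le> \<mu> ! (k - 1)) \<longleftrightarrow> (\<forall>t. Suc t < n \<longrightarrow> \<mu> ! Suc t \<le> \<mu> ! t)"
  proof (intro iffI allI impI ballI)
    fix t assume "\<forall>k\<in>{1..<n}. \<mu> ! k \<le> \<mu> ! (k - 1)" "Suc t < n"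
    then show "\<mu> ! Suc t \<le> \<mu> ! t"
      by (metis atLeastLessThan_iff diff_Suc_1 le_add1 plus_1_eq_Suc)
  next
    fix k assume "\<forall>t. Suc t < n \<longrightarrow> \<mu> ! Suc t \<le> \<mu> ! t" "k \<in> {1..<n}"
    then show "\<mu> ! k \<le> \<mu> ! (k - 1)"
      by (metis Suc_pred' atLeastLessThan_iff less_eq_Suc_le One_nat_def)
  qed
  moreover have "(\<forall>t. Suc t < n \<longrightarrow> \<mu> ! Suc t \<le> \<mu> ! t) \<longleftrightarrow> sorted (rev \<mu>)"
    using assms(1) by (simp add: sorted_rev_iff_nth_Suc)
  ultimately show ?thesis
    by blast
qed

lemma dominant_nonneg:
  assumes "length \<mu> = n" "1 \<le> n" "dominant n \<mu>" "x \<in> set \<mu>"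
  shows "0 \<le> x"
proof -
  obtain t where "t < n" "x = \<mu> ! t"
    using assms(1,4) by (auto simp: in_set_conv_nth)
  then have "\<mu> ! (n - 1) \<le> x"
    using assms(1,3) dominant_iff_sorted_rev[OF assms(1,2)] by (auto intro: sorted_rev_nth_mono)
  then show ?thesis
    using assms(3) dominant_iff_sorted_rev[OF assms(1,2)] by simp
qed

lemma dominant_unique:
  assumes "length \<mu> = n" "length \<nu> = n" "1 \<le> n" "dominant n \<mu>" "dominant n \<nu>"
    and "mset (map abs \<mu>) = mset (map abs \<nu>)"
  shows "\<mu> = \<nu>"
proof -
  have "map abs \<mu> = \<mu>" "map abs \<nu> = \<nu>"
    using dominant_nonneg[OF assms(1,3,4)] dominant_nonneg[OF assms(2,3,5)]
    by (simp_all add: map_idI)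
  then have "mset (rev \<mu>) = mset (rev \<nu>)"
    using assms(6) by simp
  then show ?thesis
    using assms dominant_iff_sorted_rev by (metis properties_for_sort rev_rev_ident)
qed

lemma weyl_orbit_has_dominant:
  assumes "length lam = n" "1 \<le> n"
  shows "\<exists>\<mu>\<in>weyl_orbit n lam. dominant n \<mu>"
proof -
  txt \<open>\<open>\<rho>\<close> pairs to \<open>1\<close> with every simple root, so reflecting a maximiser of \<open>\<langle>-, \<rho>\<rangle>\<close> in a
    simple root it pairs negatively with would increase \<open>\<langle>-, \<rho>\<rangle>\<close>.\<close>
  define \<rho> :: "real list" where "\<rho> = map (\<lambda>t. real n - real t) [0..<n]"
  have "length \<rho> = n"
    by (simp add: \<rho>_def)
  have \<rho>_nth: "\<rho> ! t = real n - real t" if "t < n" for t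
    using that by (simp add: \<rho>_def)
  have \<rho>_simple_root: "ip (simple_root n k) \<rho> = 1" if "k \<in> {1..n}" for k
  proof -
    have "ip (simple_root n k) \<rho> = ip \<rho> (simple_root n k)"
      using \<open>length \<rho> = n\<close> by (simp add: ip_commute)
    also have "\<dots> = (if k < n then \<rho> ! (k - 1) - \<rho> ! k else \<rho> ! (n - 1))"
      using \<open>length \<rho> = n\<close> that by (rule ip_simple_root)
    also have "\<dots> = 1"
      using that by (simp add: \<rho>_nth of_nat_diff)
    finally show ?thesis .
  qed
  let ?O = "weyl_orbit n lam"
  have fin: "finite ((\<lambda>x. ip x \<rho>) ` ?O)"
    using finite_weyl_orbit[OF assms(1)] by simp
  have "(\<lambda>x. ip x \<rho>) ` ?O \<noteq> {}"
    using weyl_orbit.base by blast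
  then have "Max ((\<lambda>x. ip x \<rho>) ` ?O) \<in> (\<lambda>x. ip x \<rho>) ` ?O"
    using Max_in[OF fin] by blast
  then obtain \<mu> where \<mu>: "\<mu> \<in> ?O" and "ip \<mu> \<rho> = Max ((\<lambda>x. ip x \<rho>) ` ?O)"
    by (metis (no_types, lifting) imageE)
  then have \<mu>_max: "ip \<nu> \<rho> \<le> ip \<mu> \<rho>" if "\<nu> \<in> ?O" for \<nu>
    using Max_ge[OF fin] that by simp
  have "length \<mu> = n"
    using weyl_orbit_mset_map_abs[OF assms(1) \<mu>] by simp
  have "0 \<le> ip \<mu> (simple_root n k)" if "k \<in> {1..n}" for k
  proof (rule ccontr)
    let ?\<alpha> = "simple_root n k"
    assume "\<not> 0 \<le> ip \<mu> ?\<alpha>"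
    moreover have "0 < ip ?\<alpha> ?\<alpha>"
      using that by (auto simp: ip_simple_root nth_simple_root)
    ultimately have "ip \<mu> (coroot ?\<alpha>) < 0"
      using \<open>length \<mu> = n\<close> by (simp add: ip_coroot divide_neg_pos)
    moreover have "reflect ?\<alpha> \<mu> \<in> ?O"
      using \<mu> simple_root_in_roots_B[OF that] by (rule weyl_orbit.step)
    then have "ip (reflect ?\<alpha> \<mu>) \<rho> \<le> ip \<mu> \<rho>"
      by (rule \<mu>_max)
    ultimately show False
      using \<open>length \<mu> = n\<close> \<open>length \<rho> = n\<close> \<rho>_simple_root[OF that] by (simp add: ip_reflect_left)
  qed
  then have "dominant n \<mu>"
    by (simp add: dominant_def simple_roots_def)
  with \<mu> show ?thesis
    by blast
qed

lemma dominant_rep_in_weyl_orbit: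
  assumes "length lam = n" "1 \<le> n"
  shows "dominant_rep n lam \<in> weyl_orbit n lam \<and> dominant n (dominant_rep n lam)"
  unfolding dominant_rep_def
proof (rule theI')
  obtain \<mu> where \<mu>: "\<mu> \<in> weyl_orbit n lam" "dominant n \<mu>"
    using weyl_orbit_has_dominant[OF assms] by blast
  have "\<nu> = \<mu>" if "\<nu> \<in> weyl_orbit n lam" "dominant n \<nu>" for \<nu>
  proof (rule dominant_unique)
    show "length \<nu> = n" "length \<mu> = n"
      using weyl_orbit_mset_map_abs[OF assms(1)] \<mu>(1) that(1) by blast+
    show "mset (map abs \<nu>) = mset (map abs \<mu>)"
      using weyl_orbit_mset_map_abs[OF assms(1)] \<mu>(1) that(1) by simp
  qed (use assms(2) \<mu>(2) that(2) in auto)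
  with \<mu> show "\<exists>!\<mu>. \<mu> \<in> weyl_orbit n lam \<and> dominant n \<mu>"
    by blast
qed

lemma nth_eq_if_consecutive_eq:
  assumes "t \<le> r" "\<And>s. t \<le> s \<Longrightarrow> s < r \<Longrightarrow> xs ! s = xs ! Suc s"
  shows "xs ! t = xs ! r"
proof -
  have "xs ! t = xs ! (t + d)" if "t + d \<le> r" for d
    using that
  proof (induction d)
    case 0
    show ?case by simp
  next
    case (Suc d)
    then have "xs ! t = xs ! (t + d)"
      by simp
    also have "\<dots> = xs ! Suc (t + d)"
      using Suc.prems by (intro assms(2)) auto
    finally show ?case
      by simp
  qed
  from this[of "r - t"] show ?thesis
    using assms(1) by simp
qed

lemma dominant_eq_replicate:
  assumes "length \<mu> = n" "dominant n \<mu>" "j \<in> {1..n}"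
    and "\<And>k. k \<in> {1..n} \<Longrightarrow> ip \<mu> (simple_root n k) = 0 \<longleftrightarrow> k \<noteq> j"
  shows "\<exists>a>0. \<mu> = replicate j a @ replicate (n - j) 0"
proof -
  define a where "a = ip \<mu> (simple_root n j)"
  have "0 \<le> a"
    using assms(2,3) by (simp add: a_def dominant_def simple_roots_def)
  moreover have "a \<noteq> 0"
    using assms(4)[OF assms(3)] by (simp add: a_def)
  ultimately have "0 < a"
    by simp
  have step: "\<mu> ! s = \<mu> ! Suc s" if "Suc s < n" "Suc s \<noteq> j" for s
    using assms(1) assms(4)[of "Suc s"] that by (simp add: ip_simple_root)
  have high: "\<mu> ! t = 0" if "j \<le> t" "t < n" for t
  proof -
    have "\<mu> ! t = \<mu> ! (n - 1)"
    proof (rule nth_eq_if_consecutive_eq)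
      fix s assume "t \<le> s" "s < n - 1"
      then show "\<mu> ! s = \<mu> ! Suc s"
        using that by (intro step) auto
    qed (use that in simp)
    also have "\<mu> ! (n - 1) = 0"
      using assms(1) assms(4)[of n] that by (simp add: ip_simple_root)
    finally show ?thesis .
  qed
  have low: "\<mu> ! t = a" if "t < j" for t
  proof -
    have "\<mu> ! t = \<mu> ! (j - 1)"
    proof (rule nth_eq_if_consecutive_eq)
      fix s assume "t \<le> s" "s < j - 1"
      then show "\<mu> ! s = \<mu> ! Suc s"
        using assms(3) by (intro step) auto
    qed (use that in simp)
    also have "\<mu> ! (j - 1) = a"
      using assms(1,3) high[of j] by (auto simp: a_def ip_simple_root)
    finally show ?thesis .
  qed
  have "\<mu> = replicate j a @ replicate (n - j) 0"
    using assms(1,3) low high by (intro nth_equalityI) (auto simp: nth_append)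
  with \<open>0 < a\<close> show ?thesis
    by blast
qed

section \<open>Basic weights\<close>

lemma basic_weight_dominant_rep:
  assumes "basic_weight n i j lam" "1 \<le> n" "j \<in> {1..n}"
  shows "\<exists>a>0. dominant_rep n lam = replicate j a @ replicate (n - j) 0"
proof (rule dominant_eq_replicate)
  have "length lam = n"
    using assms(1) by (simp add: basic_weight_def integral_weight_def)
  then show "length (dominant_rep n lam) = n" "dominant n (dominant_rep n lam)"
    using dominant_rep_in_weyl_orbit[OF _ assms(2)] weyl_orbit_mset_map_abs by blast+
  have zeros: "{\<alpha>\<in>simple_roots n. ip (dominant_rep n lam) \<alpha> = 0} = simple_roots n - {simple_root n j}"
    using assms(1) by (simp add: basic_weight_def)
  fix k assume "k \<in> {1..n}"
  then have "simple_root n k \<in> simple_roots n"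
    by (simp add: simple_roots_def)
  moreover have "simple_root n k = simple_root n j \<longleftrightarrow> k = j"
    using inj_on_simple_root \<open>k \<in> {1..n}\<close> assms(3) by (metis inj_onD)
  ultimately show "ip (dominant_rep n lam) (simple_root n k) = 0 \<longleftrightarrow> k \<noteq> j"
    using zeros by blast
qed (rule assms(3))

lemma basic_weight_descents:
  assumes "basic_weight n i j lam" "i \<in> {1..n}"
  shows "\<And>k. k \<in> {1..<n} \<Longrightarrow> k \<noteq> i \<Longrightarrow> lam ! k < lam ! (k - 1)"
    and "i \<noteq> n \<Longrightarrow> 0 < lam ! (n - 1)"
proof -
  have "length lam = n"
    using assms(1) by (simp add: basic_weight_def integral_weight_def)
  have pos: "0 < ip lam (coroot (simple_root n k))" if "k \<in> {1..n}" "k \<noteq> i" for k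
  proof -
    have "simple_root n k \<noteq> simple_root n i"
      using inj_on_simple_root that assms(2) by (metis inj_onD)
    then have "simple_root n k \<in> simple_roots n - {simple_root n i}"
      using that(1) by (simp add: simple_roots_def)
    then show ?thesis
      using assms(1) unfolding basic_weight_def by blast
  qed
  show "lam ! k < lam ! (k - 1)" if "k \<in> {1..<n}" "k \<noteq> i" for k
    using pos[of k] that \<open>length lam = n\<close> by (simp add: ip_coroot_simple_root)
  show "0 < lam ! (n - 1)" if "i \<noteq> n"
    using pos[of n] that \<open>length lam = n\<close> assms(2) by (simp add: ip_coroot_simple_root)
qed

lemma integral_weight_double_nth:
  assumes "integral_weight n lam" "t < n"
  shows "2 * lam ! t \<in> \<int>"
proof -
  have "smult 1 (ev n (Suc t)) \<in> roots_B n"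
    unfolding roots_B_def using assms(2)
    by (intro UnI1 CollectI exI[of _ 1] exI[of _ "Suc t"]) auto
  moreover have "ip lam (coroot (ev n (Suc t))) = 2 * lam ! t"
    using assms by (simp add: integral_weight_def ip_coroot ip_ev_left ip_ev_right)
  ultimately show ?thesis
    using assms(1) by (auto simp: integral_weight_def)
qed

lemma integral_weight_add_nth:
  assumes "integral_weight n lam" "t < n" "t' < n" "t \<noteq> t'"
  shows "lam ! t + lam ! t' \<in> \<int>"
proof -
  let ?\<alpha> = "vadd (smult 1 (ev n (Suc t))) (smult 1 (ev n (Suc t')))"
  have "?\<alpha> \<in> roots_B n"
    unfolding roots_B_def using assms(2-4)
    by (intro UnI2 CollectI exI[of _ 1] exI[of _ 1] exI[of _ "Suc t"] exI[of _ "Suc t'"]) auto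
  moreover have "ip ?\<alpha> ?\<alpha> = 2"
    using assms(2-4) by (simp add: ip_vadd_left ip_vadd_right ip_ev_left)
  then have "ip lam (coroot ?\<alpha>) = lam ! t + lam ! t'"
    using assms by (simp add: integral_weight_def ip_coroot ip_vadd_right ip_ev_right)
  ultimately show ?thesis
    using assms(1) by (auto simp: integral_weight_def)
qed

lemma integral_weight_scale_in_Nats:
  assumes "integral_weight n lam" "j \<in> {1..n}" "0 < a"
    and "mset (map abs lam) = mset (replicate j a @ replicate (n - j) 0)"
  shows "(if j < n then a else 2 * a) \<in> \<nat>"
proof -
  have "length lam = n"
    using assms(1) by (simp add: integral_weight_def)
  have abs_values: "set (map abs lam) = set (replicate j a @ replicate (n - j) 0)"
    by (metis assms(4) set_mset_mset)
  have "a \<in> set (map abs lam)"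
    using abs_values assms(2) by simp
  then obtain s where "s < n" "\<bar>lam ! s\<bar> = a"
    using \<open>length lam = n\<close> by (auto simp: in_set_conv_nth)
  then have "lam ! s = a \<or> lam ! s = - a"
    by auto
  have "(if j < n then a else 2 * a) \<in> \<int>"
  proof (cases "j < n")
    case True
    then have "0 \<in> set (map abs lam)"
      using abs_values by simp
    then obtain t where "t < n" "lam ! t = 0"
      using \<open>length lam = n\<close> by (auto simp: in_set_conv_nth)
    moreover have "s \<noteq> t"
      using \<open>\<bar>lam ! s\<bar> = a\<close> \<open>lam ! t = 0\<close> assms(3) by auto
    ultimately have "lam ! s \<in> \<int>"
      using integral_weight_add_nth[OF assms(1) \<open>s < n\<close>, of t] by simp
    then show ?thesis
      using True \<open>lam ! s = a \<or> lam ! s = - a\<close> by (metis Ints_minus minus_minus)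
  next
    case False
    have "2 * lam ! s \<in> \<int>"
      by (rule integral_weight_double_nth[OF assms(1) \<open>s < n\<close>])
    then show ?thesis
      using False \<open>lam ! s = a \<or> lam ! s = - a\<close> by (metis Ints_minus minus_minus mult_minus_right)
  qed
  then show ?thesis
    using assms(3) by (simp add: Nats_altdef2)
qed

lemma listed_B_complete:
  fixes lam :: "real list" and a :: real
  assumes "length lam = n" "2 \<le> n" "i \<in> {1..n}" "j \<in> {1..n}" "0 < a"
    and abs_mset: "mset (map abs lam) = mset (replicate j a @ replicate (n - j) 0)"
    and descent: "\<And>k. k \<in> {1..<n} \<Longrightarrow> k \<noteq> i \<Longrightarrow> lam ! k < lam ! (k - 1)"
    and last_pos: "i \<noteq> n \<Longrightarrow> 0 < lam ! (n - 1)"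
  shows "\<exists>\<mu>\<in>listed_B n i j. lam = smult (if j < n then a else 2 * a) \<mu>"
proof -
  have "set lam \<subseteq> {-a, 0, a}"
  proof
    fix x assume "x \<in> set lam"
    then have "\<bar>x\<bar> \<in> set (replicate j a @ replicate (n - j) 0)"
      by (metis abs_mset image_eqI list.set_map set_mset_mset)
    then show "x \<in> {-a, 0, a}"
      by (auto simp: abs_if split: if_splits)
  qed
  then have entry: "lam ! t \<in> {-a, 0, a}" if "t < n" for t
    using assms(1) that nth_mem by blast
  have "sum_list (map abs lam) = sum_list (replicate j a @ replicate (n - j) 0)"
    by (metis abs_mset sum_mset_sum_list)
  then have "sum_list (map abs lam) = real j * a"
    by (simp add: sum_list_replicate)
  note entries_sum = \<open>set lam \<subseteq> {-a, 0, a}\<close> \<open>sum_list (map abs lam) = real j * a\<close>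
  txt \<open>A strictly decreasing chain in \<open>{-a, 0, a}\<close> has at most three terms.\<close>
  have "n - 1 \<le> i"
  proof (rule ccontr)
    assume "\<not> n - 1 \<le> i"
    then have "lam ! (n - 1) < lam ! (n - 2)" "0 < lam ! (n - 1)"
      using assms(2) last_pos descent[of "n - 1"] by (auto simp: numeral_2_eq_2 Suc_diff_Suc)
    then show False
      using entry[of "n - 1"] entry[of "n - 2"] assms(2,5) by auto
  qed
  have "n \<le> 4"
  proof (rule ccontr)
    assume "\<not> n \<le> 4"
    then have "lam ! 1 < lam ! 0" "lam ! 2 < lam ! 1" "lam ! 3 < lam ! 2"
      using descent[of 1] descent[of 2] descent[of 3] \<open>n - 1 \<le> i\<close> by auto
    then show False
      using entry[of 0] entry[of 1] entry[of 2] entry[of 3] \<open>\<not> n \<le> 4\<close> assms(5) by auto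
  qed
  then consider "n = 2" | "n = 3" | "n = 4"
    using assms(2) by linarith
  then show ?thesis
  proof cases
    case 1
    then obtain x0 x1 where "lam = [x0, x1]"
      using assms(1) by (auto simp: length_Suc_conv numeral_eq_Suc)
    then show ?thesis
      using 1 assms(3-5) entries_sum last_pos descent[of 1] \<open>n - 1 \<le> i\<close>
      by (cases "i = n") (auto simp: listed_B_def smult_def)
  next
    case 2
    then obtain x0 x1 x2 where "lam = [x0, x1, x2]"
      using assms(1) by (auto simp: length_Suc_conv numeral_eq_Suc)
    then show ?thesis
      using 2 assms(3-5) entries_sum last_pos descent[of 1] descent[of 2] \<open>n - 1 \<le> i\<close>
      by (cases "i = n") (auto simp: listed_B_def smult_def)
  next
    case 3
    then obtain x0 x1 x2 x3 where "lam = [x0, x1, x2, x3]"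
      using assms(1) by (auto simp: length_Suc_conv numeral_eq_Suc)
    then show ?thesis
      using 3 assms(3-5) entries_sum last_pos descent[of 1] descent[of 2] descent[of 3] \<open>n - 1 \<le> i\<close>
      by (cases "i = n") (auto simp: listed_B_def smult_def)
  qed
qed

lemma basic_weight_abs_values:
  assumes "basic_weight n i j lam" "1 \<le> n" "j \<in> {1..n}"
  shows "\<exists>a>0. mset (map abs lam) = mset (replicate j a @ replicate (n - j) 0)"
proof -
  have "length lam = n"
    using assms(1) by (simp add: basic_weight_def integral_weight_def)
  obtain a where "0 < a" and rep: "dominant_rep n lam = replicate j a @ replicate (n - j) 0"
    using basic_weight_dominant_rep[OF assms] by blast
  have "dominant_rep n lam \<in> weyl_orbit n lam"
    using dominant_rep_in_weyl_orbit[OF \<open>length lam = n\<close> assms(2)] by blast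
  then have "mset (map abs lam) = mset (map abs (dominant_rep n lam))"
    using weyl_orbit_mset_map_abs[OF \<open>length lam = n\<close>] by simp
  also have "\<dots> = mset (replicate j a @ replicate (n - j) 0)"
    using rep \<open>0 < a\<close> by simp
  finally show ?thesis
    using \<open>0 < a\<close> by blast
qed

theorem theorem5p8:
  fixes n i j :: nat and lam :: "real list"
  assumes "n \<ge> 2" and "i \<in> {1..n}" and "j \<in> {1..n}"
    and "basic_system n i j"
    and "basic_weight n i j lam"
  shows "\<exists>m::nat. m > 0 \<and> (\<exists>\<mu>\<in>listed_B n i j. lam = smult (real m) \<mu>)"
proof -
  \<comment> \<open>The hypothesis \<open>basic_system n i j\<close> is implied by \<open>basic_weight n i j lam\<close> and not needed.\<close>
  have "length lam = n" "integral_weight n lam"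
    using assms(5) by (simp_all add: basic_weight_def integral_weight_def)
  obtain a where "0 < a" and abs_mset: "mset (map abs lam) = mset (replicate j a @ replicate (n - j) 0)"
    using basic_weight_abs_values[OF assms(5) _ assms(3)] assms(1) by auto
  obtain m :: nat where m: "real m = (if j < n then a else 2 * a)"
    using integral_weight_scale_in_Nats[OF \<open>integral_weight n lam\<close> assms(3) \<open>0 < a\<close> abs_mset]
    by (metis Nats_cases)
  then have "0 < m"
    using \<open>0 < a\<close> by (simp split: if_splits)
  moreover obtain \<mu> where "\<mu> \<in> listed_B n i j" "lam = smult (real m) \<mu>"
    using listed_B_complete[OF \<open>length lam = n\<close> assms(1-3) \<open>0 < a\<close> abs_mset
        basic_weight_descents[OF assms(5,2)]] m
    by metis
  ultimately show ?thesis
    by blast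
qed

end
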